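(* Let $\mathbf{L}=(L,\le)$ be a finite join-semilattice with greatest element $1_{\mathbf{L}}$, let $n\in\mathbb{N}$, and let $\mathbf{K}=(K,\le)$ with $K=\{1,\dots,n\}\cup\{\infty\}$ (disjoint union) and $\le=\mathrm{id}_K\cup(K\times\{\infty\})$, so $1_{\mathbf{K}}=\infty$. Let $S$ be a subgroup of $(\mathrm{Aut}(\mathbf{K}),\circ)$ such that $f\vee g=k_{1_{\mathbf{K}}}$ for all $f,g\in S$ with $f\ne g$, and let $\bar S=S\cup\{k_{1_{\mathbf{K}}}\}$. Let $(R,\vee,\circ)$ be a subsemiring of $(\mathrm{JM}_1(\mathbf{L}\boxtimes\mathbf{K}),\vee,\circ)$ such that (a) every $\varphi\in R$ equals $f\boxtimes g$ for some $f\in\mathrm{JM}_1(\mathbf{L})$ and $g\in\bar S$; (b) $f_{a,b}\boxtimes g\in R$ for all $a\in L\setminus\{1_{\mathbf{L}}\}$, $b\in L$, $g\in\bar S$; (c) for every $\varphi\in R$ there exist $a\in L\setminus\{1_{\mathbf{L}}\}$, $b\in L$, $g\in\bar S$ with $f_{a,b}\boxtimes g\le\varphi$. Suppose moreover that $|S|=n$, and that $n>1$ or $\mathbf{L}$ does not satisfy property $( * )$. Then $(L\boxtimes K,\vee)$, with action $\varphi\cdot z=\varphi(z)$, is a finite idempotent irreducible $R$-semimodule which does not satisfy property $( * )$.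
   Context: For a finite join-semilattice $\mathbf{M}$ with greatest element $1$, $\mathrm{JM}_1(\mathbf{M})$ is the set of join-preserving maps $f:M\to M$ with $f(1)=1$, a semiring under pointwise join and composition, ordered pointwise; $k_a$ is the constant map with value $a$; $f_{a,b}(x)=b$ if $x\le a$ and $1$ otherwise. $\mathrm{Aut}(\mathbf{K})$ is the group of order automorphisms of $\mathbf{K}$. Let $A=\{(x,y)\in L\times K: x=1_{\mathbf{L}}\text{ or }y=1_{\mathbf{K}}\}$, and $L\boxtimes K$ the quotient of $L\times K$ collapsing $A$ to one class (denoted $A$), other classes singletons; order: every class is $\le A$, and $[a,b]\le[c,d]$ iff $a\le c$, $b\le d$ for classes other than $A$; $\mathbf{L}\boxtimes\mathbf{K}=(L\boxtimes K,\le)$. For $f\in\mathrm{JM}_1(\mathbf{L})$, $g\in\mathrm{JM}_1(\mathbf{K})$, $(f\boxtimes g)([x,y])=[f(x),g(y)]$. A semilattice $(M,+)$ with greatest element $\infty_M$ satisfies $( * )$ if there exists $u\in M$ with $\infty_M\ne u+x$ for all $x\ne\infty_M$. An $R$-semimodule is a commutative semigroup $(M,+)$ with an action satisfying $r(sx)=(rs)x$, $(r+s)x=rx+sx$, $r(x+y)=rx+ry$; idempotent if $x+x=x$. A subsemimodule is a subsemigroup closed under the action; a semimodule congruence is an equivalence compatible with $+$ and the action. $M$ is quasitrivial if $rx=sx$ for all $r,s,x$; id-quasitrivial if $rx=x$ for all $r,x$; sub-irreducible if not quasitrivial and all proper subsemimodules are id-quasitrivial; quotient-irreducible if not quasitrivial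 and its only congruences are the identity and $M\times M$; irreducible if both. *)

theory Defs
  imports Main
begin

text \<open>K is represented as the type 'k kext, where 'k is a finite type with CARD('k) = n;
  Fin i stands for the element i of {1,...,n} and Infty for infinity.
  The order is id_K union (K x {infinity}).\<close>

datatype 'k kext = Fin 'k | Infty

instantiation kext :: (type) order_top
begin
definition less_eq_kext :: "'k kext \<Rightarrow> 'k kext \<Rightarrow> bool" where
  "less_eq_kext x y \<longleftrightarrow> x = y \<or> y = Infty"
definition less_kext :: "'k kext \<Rightarrow> 'k kext \<Rightarrow> bool" where
  "less_kext x y \<longleftrightarrow> x \<le> y \<and> x \<noteq> y"
definition top_kext :: "'k kext" where
  "top_kext = Infty"
instance by standard (auto simp: less_eq_kext_def less_kext_def top_kext_def)
end

instantiation kext :: (type) semilattice_sup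
begin
definition sup_kext :: "'k kext \<Rightarrow> 'k kext \<Rightarrow> 'k kext" where
  "sup_kext x y = (if x = y then x else Infty)"
instance by standard (auto simp: less_eq_kext_def sup_kext_def)
end

text \<open>Elements: the class A (represented by None) and the singleton classes [x,y]
  with x \<noteq> 1 and y \<noteq> 1 (represented by Some (x,y)).\<close>

typedef (overloaded) ('a::order_top, 'b::order_top) boxt =
  "{z :: ('a \<times> 'b) option. \<forall>a b. z = Some (a, b) \<longrightarrow> a \<noteq> top \<and> b \<noteq> top}"
  by (rule exI[of _ None]) auto

definition bcls :: "'a::order_top \<Rightarrow> 'b::order_top \<Rightarrow> ('a, 'b) boxt" where
  "bcls x y = Abs_boxt (if x = top \<or> y = top then None else Some (x, y))"

instantiation boxt :: (order_top, order_top) order_top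
begin
definition less_eq_boxt :: "('a, 'b) boxt \<Rightarrow> ('a, 'b) boxt \<Rightarrow> bool" where
  "less_eq_boxt z w \<longleftrightarrow> Rep_boxt w = None \<or>
     (\<exists>a b c d. Rep_boxt z = Some (a, b) \<and> Rep_boxt w = Some (c, d) \<and> a \<le> c \<and> b \<le> d)"
definition less_boxt :: "('a, 'b) boxt \<Rightarrow> ('a, 'b) boxt \<Rightarrow> bool" where
  "less_boxt z w \<longleftrightarrow> z \<le> w \<and> z \<noteq> w"
definition top_boxt :: "('a, 'b) boxt" where
  "top_boxt = Abs_boxt None"
instance
proof
  fix x y z :: "('a, 'b) boxt"
  show "(x < y) = (x \<le> y \<and> \<not> y \<le> x)"
    using Rep_boxt[of x] Rep_boxt[of y]
    by (auto simp: less_boxt_def less_eq_boxt_def Rep_boxt_inject[symmetric])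
  show "x \<le> x" by (cases "Rep_boxt x") (auto simp: less_eq_boxt_def)
  show "x \<le> y \<Longrightarrow> y \<le> z \<Longrightarrow> x \<le> z"
    using Rep_boxt[of y] Rep_boxt[of z]
    by (auto simp: less_eq_boxt_def intro: order_trans)
  show "x \<le> y \<Longrightarrow> y \<le> x \<Longrightarrow> x = y"
    using Rep_boxt[of x] Rep_boxt[of y]
    by (auto simp: less_eq_boxt_def Rep_boxt_inject[symmetric])
  show "x \<le> top"
    by (simp add: less_eq_boxt_def top_boxt_def Abs_boxt_inverse)
qed
end

instantiation boxt :: ("{semilattice_sup,order_top}", "{semilattice_sup,order_top}") semilattice_sup
begin
definition sup_boxt :: "('a, 'b) boxt \<Rightarrow> ('a, 'b) boxt \<Rightarrow> ('a, 'b) boxt" where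
  "sup_boxt z w = (case (Rep_boxt z, Rep_boxt w) of
     (Some (a, b), Some (c, d)) \<Rightarrow> bcls (sup a c) (sup b d)
   | _ \<Rightarrow> top)"
instance
proof
  fix x y z :: "('a, 'b) boxt"
  have R: "Rep_boxt (bcls a b) = (if a = top \<or> b = top then None else Some (a, b))" for a :: 'a and b :: 'b
    unfolding bcls_def by (rule Abs_boxt_inverse) auto
  have T: "Rep_boxt (top :: ('a,'b) boxt) = None"
    by (simp add: top_boxt_def Abs_boxt_inverse)
  have ge: "u \<le> sup u v \<and> v \<le> sup u v" for u v :: "('a, 'b) boxt"
  proof (cases "\<exists>a b c d. Rep_boxt u = Some (a, b) \<and> Rep_boxt v = Some (c, d)")
    case True
    then obtain a b c d where u: "Rep_boxt u = Some (a, b)" and v: "Rep_boxt v = Some (c, d)"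
      by blast
    show ?thesis
    proof (cases "sup a c = top \<or> sup b d = top")
      case True then show ?thesis using u v
        by (simp add: sup_boxt_def less_eq_boxt_def R)
    next
      case False then show ?thesis using u v
        by (simp add: sup_boxt_def less_eq_boxt_def R)
    qed
  next
    case False
    then have "sup u v = top"
      by (cases "Rep_boxt u"; cases "Rep_boxt v") (auto simp: sup_boxt_def)
    then show ?thesis by simp
  qed
  show "x \<le> sup x y" using ge by blast
  show "y \<le> sup x y" using ge by blast
  show "y \<le> x \<Longrightarrow> z \<le> x \<Longrightarrow> sup y z \<le> x"
  proof -
    assume a1: "y \<le> x" and a2: "z \<le> x"
    show "sup y z \<le> x"
    proof (cases "Rep_boxt x")
      case None then show ?thesis by (simp add: less_eq_boxt_def)
    next
      case (Some p)
      obtain e f where p: "p = (e, f)" by (cases p)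
      have x: "Rep_boxt x = Some (e, f)" using Some p by simp
      have ef: "e \<noteq> top" "f \<noteq> top" using Rep_boxt[of x] x by auto
      from a1 x obtain a b where
        y: "Rep_boxt y = Some (a, b)" and le1: "a \<le> e" "b \<le> f"
        unfolding less_eq_boxt_def by auto
      from a2 x obtain c d where
        z: "Rep_boxt z = Some (c, d)" and le2: "c \<le> e" "d \<le> f"
        unfolding less_eq_boxt_def by auto
      have s1: "sup a c \<le> e" "sup b d \<le> f" using le1 le2 by simp_all
      have n1: "sup a c \<noteq> top" using s1(1) ef(1) top_unique by metis
      have n2: "sup b d \<noteq> top" using s1(2) ef(2) top_unique by metis
      have "Rep_boxt (sup y z) = Some (sup a c, sup b d)"
        using y z n1 n2 by (simp add: sup_boxt_def R)
      then show ?thesis using s1 x unfolding less_eq_boxt_def by blast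
    qed
  qed
qed
end

text \<open>The product map (f boxtimes g)([x,y]) = [f x, g y]; on the class A it is A
  (which agrees with the paper's definition, since f(1) = 1).\<close>

definition boxmap :: "('a::order_top \<Rightarrow> 'a) \<Rightarrow> ('b::order_top \<Rightarrow> 'b) \<Rightarrow> ('a, 'b) boxt \<Rightarrow> ('a, 'b) boxt" where
  "boxmap f g z = (case Rep_boxt z of None \<Rightarrow> top | Some (x, y) \<Rightarrow> bcls (f x) (g y))"

definition JM1 :: "('m::{sup,top} \<Rightarrow> 'm) set" where
  "JM1 = {f. (\<forall>x y. f (sup x y) = sup (f x) (f y)) \<and> f top = top}"

definition kconst :: "'m \<Rightarrow> ('m \<Rightarrow> 'm)" where
  "kconst a = (\<lambda>_. a)"

definition fab :: "'m::order_top \<Rightarrow> 'm \<Rightarrow> ('m \<Rightarrow> 'm)" where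
  "fab a b = (\<lambda>x. if x \<le> a then b else top)"

definition Aut :: "('k::order \<Rightarrow> 'k) set" where
  "Aut = {f. bij f \<and> (\<forall>x y. x \<le> y \<longleftrightarrow> f x \<le> f y)}"

definition subgroup_Aut :: "('k::order \<Rightarrow> 'k) set \<Rightarrow> bool" where
  "subgroup_Aut S \<longleftrightarrow> S \<subseteq> Aut \<and> id \<in> S \<and> (\<forall>f\<in>S. \<forall>g\<in>S. f \<circ> g \<in> S) \<and> (\<forall>f\<in>S. inv f \<in> S)"

definition subsemiring_JM1 :: "('m::{semilattice_sup,top} \<Rightarrow> 'm) set \<Rightarrow> bool" where
  "subsemiring_JM1 R \<longleftrightarrow> R \<noteq> {} \<and> R \<subseteq> JM1 \<and>
     (\<forall>f\<in>R. \<forall>g\<in>R. sup f g \<in> R \<and> f \<circ> g \<in> R)"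

definition star_prop :: "('m \<Rightarrow> 'm \<Rightarrow> 'm) \<Rightarrow> 'm \<Rightarrow> bool" where
  "star_prop add infty \<longleftrightarrow> (\<exists>u. \<forall>x. x \<noteq> infty \<longrightarrow> infty \<noteq> add u x)"

definition semimodule ::
  "'r set \<Rightarrow> ('r \<Rightarrow> 'r \<Rightarrow> 'r) \<Rightarrow> ('r \<Rightarrow> 'r \<Rightarrow> 'r) \<Rightarrow> ('m \<Rightarrow> 'm \<Rightarrow> 'm) \<Rightarrow> ('r \<Rightarrow> 'm \<Rightarrow> 'm) \<Rightarrow> bool" where
  "semimodule R radd rmul add act \<longleftrightarrow>
     (\<forall>x y z. add (add x y) z = add x (add y z)) \<and> (\<forall>x y. add x y = add y x) \<and>
     (\<forall>r\<in>R. \<forall>s\<in>R. \<forall>x. act r (act s x) = act (rmul r s) x) \<and>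
     (\<forall>r\<in>R. \<forall>s\<in>R. \<forall>x. act (radd r s) x = add (act r x) (act s x)) \<and>
     (\<forall>r\<in>R. \<forall>x y. act r (add x y) = add (act r x) (act r y))"

definition idempotent_sm :: "('m \<Rightarrow> 'm \<Rightarrow> 'm) \<Rightarrow> bool" where
  "idempotent_sm add \<longleftrightarrow> (\<forall>x. add x x = x)"

definition subsemimodule :: "'r set \<Rightarrow> ('m \<Rightarrow> 'm \<Rightarrow> 'm) \<Rightarrow> ('r \<Rightarrow> 'm \<Rightarrow> 'm) \<Rightarrow> 'm set \<Rightarrow> bool" where
  "subsemimodule R add act N \<longleftrightarrow>
     (\<forall>x\<in>N. \<forall>y\<in>N. add x y \<in> N) \<and> (\<forall>r\<in>R. \<forall>x\<in>N. act r x \<in> N)"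

definition sm_congruence :: "'r set \<Rightarrow> ('m \<Rightarrow> 'm \<Rightarrow> 'm) \<Rightarrow> ('r \<Rightarrow> 'm \<Rightarrow> 'm) \<Rightarrow> ('m \<times> 'm) set \<Rightarrow> bool" where
  "sm_congruence R add act E \<longleftrightarrow> equiv UNIV E \<and>
     (\<forall>x y u v. (x, y) \<in> E \<and> (u, v) \<in> E \<longrightarrow> (add x u, add y v) \<in> E) \<and>
     (\<forall>r\<in>R. \<forall>x y. (x, y) \<in> E \<longrightarrow> (act r x, act r y) \<in> E)"

definition quasitrivial :: "'r set \<Rightarrow> ('r \<Rightarrow> 'm \<Rightarrow> 'm) \<Rightarrow> bool" where
  "quasitrivial R act \<longleftrightarrow> (\<forall>r\<in>R. \<forall>s\<in>R. \<forall>x. act r x = act s x)"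

definition id_quasitrivial_on :: "'r set \<Rightarrow> ('r \<Rightarrow> 'm \<Rightarrow> 'm) \<Rightarrow> 'm set \<Rightarrow> bool" where
  "id_quasitrivial_on R act N \<longleftrightarrow> (\<forall>r\<in>R. \<forall>x\<in>N. act r x = x)"

definition sub_irreducible :: "'r set \<Rightarrow> ('m \<Rightarrow> 'm \<Rightarrow> 'm) \<Rightarrow> ('r \<Rightarrow> 'm \<Rightarrow> 'm) \<Rightarrow> bool" where
  "sub_irreducible R add act \<longleftrightarrow> \<not> quasitrivial R act \<and>
     (\<forall>N. subsemimodule R add act N \<and> N \<noteq> UNIV \<longrightarrow> id_quasitrivial_on R act N)"

definition quotient_irreducible :: "'r set \<Rightarrow> ('m \<Rightarrow> 'm \<Rightarrow> 'm) \<Rightarrow> ('r \<Rightarrow> 'm \<Rightarrow> 'm) \<Rightarrow> bool" where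
  "quotient_irreducible R add act \<longleftrightarrow> \<not> quasitrivial R act \<and>
     (\<forall>E. sm_congruence R add act E \<longrightarrow> E = Id \<or> E = UNIV)"

definition irreducible_sm :: "'r set \<Rightarrow> ('m \<Rightarrow> 'm \<Rightarrow> 'm) \<Rightarrow> ('r \<Rightarrow> 'm \<Rightarrow> 'm) \<Rightarrow> bool" where
  "irreducible_sm R add act \<longleftrightarrow> sub_irreducible R add act \<and> quotient_irreducible R add act"

end

theory Submission
  imports Defs
begin

text \<open>Because distinct elements of \<open>S\<close> disagree at every point and \<open>|S| = n\<close>, the group \<open>S\<close>
  acts simply transitively on \<open>{1,\<dots>,n}\<close>. Together with the maps \<open>f\<^sub>a\<^sub>,\<^sub>b \<boxtimes> g\<close> this makes \<open>R\<close>
  act transitively on the non-top elements of \<open>L \<boxtimes> K\<close>: any non-top element can be sent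
  anywhere, while the top element is fixed. Hence a proper subsemimodule contains only the top,
  and a congruence that glues a single non-top element to the top glues everything. A
  non-identity congruence does glue such a pair: it relates some \<open>u < v\<close>, and either \<open>v\<close> is
  the top or the map \<open>f\<^sub>c\<^sub>,\<^sub>c \<boxtimes> id\<close> with \<open>u = [c, i]\<close> fixes \<open>u\<close> and sends \<open>v\<close> to the top.
  Property \<open>(*)\<close> fails because \<open>[c, i] \<or> [c', j] = A\<close> whenever \<open>i \<noteq> j\<close>, and for \<open>n = 1\<close> it
  fails already in \<open>L\<close>.\<close>

lemma not_quasitrivial_if_transitive:
  assumes "x \<noteq> t" and transitive: "\<forall>x. x \<noteq> t \<longrightarrow> (\<forall>z. \<exists>r\<in>R. act r x = z)"
  shows "\<not> quasitrivial R act"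
proof
  assume "quasitrivial R act"
  obtain r where "r \<in> R" "act r x = x" using transitive \<open>x \<noteq> t\<close> by blast
  moreover obtain s where "s \<in> R" "act s x = t" using transitive \<open>x \<noteq> t\<close> by blast
  ultimately have "x = t" using \<open>quasitrivial R act\<close> unfolding quasitrivial_def by metis
  then show False using \<open>x \<noteq> t\<close> by blast
qed

lemma sub_irreducible_if_transitive:
  assumes "x \<noteq> t" and fixed: "\<forall>r\<in>R. act r t = t"
    and transitive: "\<forall>x. x \<noteq> t \<longrightarrow> (\<forall>z. \<exists>r\<in>R. act r x = z)"
  shows "sub_irreducible R add act"
  unfolding sub_irreducible_def id_quasitrivial_on_def
proof (intro conjI not_quasitrivial_if_transitive[OF assms(1) transitive] allI impI ballI)
  fix N r y assume N: "subsemimodule R add act N \<and> N \<noteq> UNIV" and "r \<in> R" "y \<in> N"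
  have "y = t"
  proof (rule ccontr)
    assume "y \<noteq> t"
    have "z \<in> N" for z
    proof -
      obtain s where "s \<in> R" "act s y = z" using transitive \<open>y \<noteq> t\<close> by blast
      then show ?thesis using N \<open>y \<in> N\<close> by (auto simp: subsemimodule_def)
    qed
    then show False using N by blast
  qed
  then show "act r y = y" using fixed \<open>r \<in> R\<close> by blast
qed

lemma sm_congruence_eq_UNIV_if_collapse:
  assumes E: "sm_congruence R add act E" and fixed: "\<forall>r\<in>R. act r t = t"
    and reach: "\<forall>z. \<exists>r\<in>R. act r u = z" and "(u, t) \<in> E"
  shows "E = UNIV"
proof -
  have "(z, t) \<in> E" for z
  proof -
    obtain r where "r \<in> R" "act r u = z" using reach by blast
    moreover have "(act r u, act r t) \<in> E"
      using E \<open>r \<in> R\<close> \<open>(u, t) \<in> E\<close> by (simp add: sm_congruence_def)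
    ultimately show ?thesis using fixed by simp
  qed
  moreover have "equiv UNIV E" using E by (simp add: sm_congruence_def)
  ultimately have "(z, w) \<in> E" for z w
    by (meson equiv_def symD transD)
  then show ?thesis by auto
qed

lemma sm_congruence_obtains_less:
  fixes E :: "('m::semilattice_sup \<times> 'm) set"
  assumes E: "sm_congruence R sup act E" and "(x, y) \<in> E" "x \<noteq> y"
  obtains u v where "u < v" "(u, v) \<in> E"
proof -
  have equiv: "equiv UNIV E" and sup_compat: "\<And>x y u v. (x, y) \<in> E \<Longrightarrow> (u, v) \<in> E \<Longrightarrow> (sup x u, sup y v) \<in> E"
    using E by (simp_all add: sm_congruence_def)
  then have "(x, x) \<in> E" "(y, y) \<in> E" by (simp_all add: equiv_def refl_on_def)
  then have "(sup x x, sup x y) \<in> E" "(sup x y, sup y y) \<in> E"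
    using sup_compat \<open>(x, y) \<in> E\<close> by blast+
  then have "(x, sup x y) \<in> E" "(y, sup x y) \<in> E" using equiv by (simp_all add: equiv_def symD)
  show thesis
  proof (cases "x = sup x y")
    case True
    then have "y < sup x y" using \<open>x \<noteq> y\<close> by (metis sup.cobounded2 order.not_eq_order_implies_strict)
    then show thesis using that \<open>(y, sup x y) \<in> E\<close> by blast
  next
    case False
    then have "x < sup x y" by (simp add: order.not_eq_order_implies_strict)
    then show thesis using that \<open>(x, sup x y) \<in> E\<close> by blast
  qed
qed

lemma semimodule_JM1:
  fixes R :: "('m::{semilattice_sup, top} \<Rightarrow> 'm) set"
  assumes "R \<subseteq> JM1"
  shows "semimodule R sup (\<circ>) sup (\<lambda>\<phi> z. \<phi> z)"
  using assms unfolding semimodule_def JM1_def by (auto simp: sup_aci)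

instance kext :: (finite) finite
proof
  have "(UNIV :: 'a kext set) = insert Infty (range Fin)"
    by (auto intro: kext.exhaust)
  moreover have "finite (insert Infty (range (Fin :: 'a \<Rightarrow> _)))" by simp
  ultimately show "finite (UNIV :: 'a kext set)" by simp
qed

lemma kext_not_top_obtains_Fin:
  assumes "(p :: 'k kext) \<noteq> top"
  obtains i where "p = Fin i"
  using assms by (cases p) (auto simp: top_kext_def)

lemma sup_Fin_Fin: "sup (Fin i) (Fin j) = (if i = j then Fin i else Infty)"
  by (simp add: sup_kext_def)

lemma Aut_kext_Infty:
  assumes "g \<in> (Aut :: ('k kext \<Rightarrow> 'k kext) set)"
  shows "g Infty = Infty"
proof -
  have "surj g" and order: "\<And>x y. x \<le> y \<longleftrightarrow> g x \<le> g y"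
    using assms by (auto simp: Aut_def bij_is_surj)
  obtain x where "Infty = g x" using \<open>surj g\<close> by (rule surjE)
  moreover have "g x \<le> g Infty" using order by (simp add: less_eq_kext_def)
  ultimately show ?thesis by (auto simp: less_eq_kext_def)
qed

lemma Aut_kext_Fin_in_range:
  assumes "g \<in> (Aut :: ('k kext \<Rightarrow> 'k kext) set)"
  shows "g (Fin i) \<in> range Fin"
proof -
  have "inj g" using assms by (simp add: Aut_def bij_is_inj)
  then have "g (Fin i) \<noteq> Infty" using Aut_kext_Infty[OF assms] by (metis inj_eq kext.distinct(1))
  then show ?thesis by (cases "g (Fin i)") auto
qed

lemma image_eval_eq_if_pointwise_distinct:
  assumes "finite B" "(\<lambda>f. f x) ` S \<subseteq> B"
    and distinct: "\<forall>f\<in>S. \<forall>g\<in>S. f \<noteq> g \<longrightarrow> f x \<noteq> g x" and "card S = card B"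
  shows "(\<lambda>f. f x) ` S = B"
proof (rule card_subset_eq[OF \<open>finite B\<close> \<open>(\<lambda>f. f x) ` S \<subseteq> B\<close>])
  have "inj_on (\<lambda>f. f x) S" using distinct by (meson inj_onI)
  then show "card ((\<lambda>f. f x) ` S) = card B" using \<open>card S = card B\<close> by (simp add: card_image)
qed

lemma Aut_kext_transitive:
  fixes S :: "('k::finite kext \<Rightarrow> 'k kext) set"
  assumes "S \<subseteq> Aut" and disjoint: "\<forall>f\<in>S. \<forall>g\<in>S. f \<noteq> g \<longrightarrow> sup f g = kconst top"
    and "card S = card (UNIV :: 'k set)"
  shows "\<exists>g\<in>S. g (Fin i) = Fin j"
proof -
  have Fin_in_range: "g (Fin i) \<in> range Fin" if "g \<in> S" for g
    using Aut_kext_Fin_in_range[OF subsetD[OF \<open>S \<subseteq> Aut\<close> that]] .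
  then have "(\<lambda>g. g (Fin i)) ` S \<subseteq> range Fin" by (rule image_subsetI)
  moreover have "f (Fin i) \<noteq> g (Fin i)" if fg: "f \<in> S" "g \<in> S" "f \<noteq> g" for f g
  proof
    assume same: "f (Fin i) = g (Fin i)"
    obtain k where k: "f (Fin i) = Fin k" using Fin_in_range[OF \<open>f \<in> S\<close>] by auto
    have "sup f g = kconst top" using disjoint fg by simp
    then have "sup f g (Fin i) = Infty" by (simp add: kconst_def top_kext_def)
    then have "sup (f (Fin i)) (g (Fin i)) = Infty" by (simp only: sup_apply)
    then show False using same k by simp
  qed
  moreover have "card (range (Fin :: 'k \<Rightarrow> 'k kext)) = card (UNIV :: 'k set)"
    by (simp add: card_image inj_on_def)
  ultimately have "(\<lambda>g. g (Fin i)) ` S = range Fin"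
    using \<open>card S = card (UNIV :: 'k set)\<close> by (intro image_eval_eq_if_pointwise_distinct) simp_all
  then have "Fin j \<in> (\<lambda>g. g (Fin i)) ` S" by simp
  then show ?thesis by auto
qed

lemma Rep_bcls: "Rep_boxt (bcls a b) = (if a = top \<or> b = top then None else Some (a, b))"
  unfolding bcls_def by (rule Abs_boxt_inverse) auto

lemma Rep_boxt_top: "Rep_boxt (top :: ('a::order_top, 'b::order_top) boxt) = None"
  by (simp add: top_boxt_def Abs_boxt_inverse)

instance boxt :: ("{order_top, finite}", "{order_top, finite}") finite
proof
  show "finite (UNIV :: ('a, 'b) boxt set)"
    by (rule finite_imageD[of Rep_boxt]) (simp_all add: Rep_boxt_inject inj_on_def)
qed

lemma boxt_cases:
  fixes z :: "('a::order_top, 'b::order_top) boxt"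
  obtains "z = top" | a b where "a \<noteq> top" "b \<noteq> top" "z = bcls a b"
proof (cases "Rep_boxt z")
  case None
  then have "z = top" by (metis Rep_boxt_inverse top_boxt_def)
  then show ?thesis by (rule that(1))
next
  case (Some p)
  obtain a b where p: "p = (a, b)" by (cases p)
  have ab: "a \<noteq> top" "b \<noteq> top" using Rep_boxt[of z] Some p by auto
  have "z = bcls a b" using Some p ab by (metis Rep_bcls Rep_boxt_inject)
  then show ?thesis using that(2) ab by blast
qed

lemma bcls_eq_top_iff: "bcls a b = (top :: ('a::order_top, 'b::order_top) boxt) \<longleftrightarrow> a = top \<or> b = top"
  by (metis Rep_bcls Rep_boxt_top Rep_boxt_inject option.distinct(1))

lemma bcls_le_bcls_iff:
  "a \<noteq> top \<Longrightarrow> b \<noteq> top \<Longrightarrow> c \<noteq> top \<Longrightarrow> d \<noteq> top \<Longrightarrow>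
   (bcls a b :: ('a::order_top, 'b::order_top) boxt) \<le> bcls c d \<longleftrightarrow> a \<le> c \<and> b \<le> d"
  by (simp add: less_eq_boxt_def Rep_bcls)

lemma sup_bcls:
  fixes a c :: "'a::{semilattice_sup, order_top}" and b d :: "'b::{semilattice_sup, order_top}"
  shows "a \<noteq> top \<Longrightarrow> b \<noteq> top \<Longrightarrow> c \<noteq> top \<Longrightarrow> d \<noteq> top \<Longrightarrow>
    sup (bcls a b) (bcls c d) = bcls (sup a c) (sup b d)"
  by (simp add: sup_boxt_def Rep_bcls)

lemma boxmap_top: "boxmap f g top = top"
  by (simp add: boxmap_def Rep_boxt_top)

lemma boxmap_bcls: "a \<noteq> top \<Longrightarrow> b \<noteq> top \<Longrightarrow> boxmap f g (bcls a b) = bcls (f a) (g b)"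
  by (simp add: boxmap_def Rep_bcls)

lemma boxmap_fab_reaches:
  fixes x z :: "('a::order_top, 'k kext) boxt"
  assumes fab_mem: "\<And>a b g. a \<noteq> top \<Longrightarrow> g \<in> S \<Longrightarrow> boxmap (fab a b) g \<in> R"
    and S_transitive: "\<forall>i j. \<exists>g\<in>S. g (Fin i) = Fin j" and "x \<noteq> top"
  shows "\<exists>r\<in>R. r x = z"
proof -
  obtain c i where c: "c \<noteq> top" and x: "x = bcls c (Fin i)"
    using \<open>x \<noteq> top\<close> by (cases x rule: boxt_cases) (auto elim: kext_not_top_obtains_Fin)
  show ?thesis
  proof (cases z rule: boxt_cases)
    case 1
    obtain g where "g \<in> S" "g (Fin i) = Fin i" using S_transitive by blast
    then have "boxmap (fab c top) g x = z"
      using 1 c x by (simp add: boxmap_bcls fab_def bcls_eq_top_iff top_kext_def)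
    then show ?thesis using fab_mem[OF c \<open>g \<in> S\<close>] by blast
  next
    case (2 b q)
    then obtain j where j: "q = Fin j" by (auto elim: kext_not_top_obtains_Fin)
    obtain g where "g \<in> S" "g (Fin i) = Fin j" using S_transitive by blast
    then have "boxmap (fab c b) g x = z"
      using 2 c x j by (simp add: boxmap_bcls fab_def top_kext_def)
    then show ?thesis using fab_mem[OF c \<open>g \<in> S\<close>] by blast
  qed
qed

lemma boxmap_fab_separates_less:
  fixes u v :: "('a::order_top, 'k kext) boxt"
  assumes "u < v" "v \<noteq> top"
  obtains c where "c \<noteq> top" "boxmap (fab c c) id u = u" "boxmap (fab c c) id v = top"
proof -
  have "u \<noteq> top" using \<open>u < v\<close> top.extremum_strict by blast
  then obtain c p where c: "c \<noteq> top" "p \<noteq> top" and u: "u = bcls c p"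
    by (cases u rule: boxt_cases) auto
  obtain d q where d: "d \<noteq> top" "q \<noteq> top" and v: "v = bcls d q"
    using \<open>v \<noteq> top\<close> by (cases v rule: boxt_cases) auto
  have "u \<le> v" "u \<noteq> v" using \<open>u < v\<close> by auto
  then have "c \<le> d" "p \<le> q" using c d u v by (simp_all add: bcls_le_bcls_iff)
  moreover have "p = q" using \<open>p \<le> q\<close> d by (simp add: less_eq_kext_def top_kext_def)
  ultimately have "\<not> d \<le> c" using u v \<open>u \<noteq> v\<close> by auto
  then show thesis
    using that c d u v by (simp add: boxmap_bcls fab_def bcls_eq_top_iff)
qed

lemma sm_congruence_boxt_obtains_collapse:
  fixes R :: "(('a::{semilattice_sup, order_top}, 'k kext) boxt \<Rightarrow> ('a, 'k kext) boxt) set"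
  assumes E: "sm_congruence R sup (\<lambda>\<phi> z. \<phi> z) E"
    and separating: "\<forall>c. c \<noteq> top \<longrightarrow> boxmap (fab c c) id \<in> R"
    and "(x, y) \<in> E" "x \<noteq> y"
  obtains u where "u \<noteq> top" "(u, top) \<in> E"
proof -
  obtain u v where "u < v" "(u, v) \<in> E"
    using sm_congruence_obtains_less[OF E \<open>(x, y) \<in> E\<close> \<open>x \<noteq> y\<close>] by blast
  have "(u, top) \<in> E"
  proof (cases "v = top")
    case False
    obtain c where "c \<noteq> top" "boxmap (fab c c) id u = u" "boxmap (fab c c) id v = top"
      using boxmap_fab_separates_less[OF \<open>u < v\<close> False] by blast
    moreover have "(boxmap (fab c c) id u, boxmap (fab c c) id v) \<in> E"
      using E separating \<open>c \<noteq> top\<close> \<open>(u, v) \<in> E\<close> by (simp add: sm_congruence_def)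
    ultimately show ?thesis by simp
  qed (use \<open>(u, v) \<in> E\<close> in simp)
  moreover have "u \<noteq> top" using \<open>u < v\<close> top.extremum_strict by blast
  ultimately show thesis using that by blast
qed

lemma sm_congruence_boxt_eq_Id_or_UNIV:
  fixes R :: "(('a::{semilattice_sup, order_top}, 'k kext) boxt \<Rightarrow> ('a, 'k kext) boxt) set"
  assumes E: "sm_congruence R sup (\<lambda>\<phi> z. \<phi> z) E" and fixed: "\<forall>r\<in>R. r top = top"
    and transitive: "\<forall>x. x \<noteq> top \<longrightarrow> (\<forall>z. \<exists>r\<in>R. r x = z)"
    and separating: "\<forall>c. c \<noteq> top \<longrightarrow> boxmap (fab c c) id \<in> R"
  shows "E = Id \<or> E = UNIV"
proof (cases "E = Id")
  case False
  moreover have "Id \<subseteq> E" using E by (auto simp: sm_congruence_def equiv_def refl_on_def)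
  ultimately obtain x y where "(x, y) \<in> E" "x \<noteq> y" by auto
  then obtain u where "u \<noteq> top" "(u, top) \<in> E"
    by (rule sm_congruence_boxt_obtains_collapse[OF E separating])
  moreover from \<open>u \<noteq> top\<close> have "\<forall>z. \<exists>r\<in>R. r u = z" using transitive by blast
  ultimately have "E = UNIV" using sm_congruence_eq_UNIV_if_collapse[OF E fixed] by blast
  then show ?thesis ..
qed simp

lemma not_star_prop_boxt:
  fixes a :: "'a::{semilattice_sup, order_top}"
  assumes "a \<noteq> top" and "card (UNIV :: 'k::finite set) > 1 \<or> \<not> star_prop (sup :: 'a \<Rightarrow> 'a \<Rightarrow> 'a) top"
  shows "\<not> star_prop (sup :: ('a, 'k kext) boxt \<Rightarrow> _ \<Rightarrow> _) top"
  unfolding star_prop_def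
proof (intro notI, elim exE)
  fix u :: "('a, 'k kext) boxt" assume u_star: "\<forall>x. x \<noteq> top \<longrightarrow> top \<noteq> sup u x"
  have a_not_top: "bcls a (Fin j) \<noteq> top" for j :: 'k
    using \<open>a \<noteq> top\<close> by (simp add: bcls_eq_top_iff top_kext_def)
  show False
  proof (cases u rule: boxt_cases)
    case 1
    moreover have "sup top x = (top :: ('a, 'k kext) boxt)" for x
      by (rule top_unique[THEN iffD1]) (rule sup_ge1)
    ultimately show False using u_star[rule_format, OF a_not_top[of undefined]] by simp
  next
    case (2 c p)
    then obtain i where i: "p = Fin i" by (auto elim: kext_not_top_obtains_Fin)
    show False
    proof (cases "card (UNIV :: 'k set) > 1")
      case True
      have "UNIV \<noteq> {i}"
      proof
        assume "UNIV = {i}"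
        then have "card (UNIV :: 'k set) = card {i}" by (simp only:)
        then show False using True by simp
      qed
      then obtain j :: 'k where "j \<noteq> i" by blast
      then have "sup u (bcls a (Fin j)) = top"
        using 2 i \<open>a \<noteq> top\<close> by (simp add: sup_bcls sup_Fin_Fin bcls_eq_top_iff top_kext_def)
      then show False using u_star[rule_format, OF a_not_top[of j]] by simp
    next
      case False
      then obtain y :: 'a where "y \<noteq> top" "top = sup c y"
        using assms(2) unfolding star_prop_def by blast
      then have "sup u (bcls y p) = top" using 2 by (simp add: sup_bcls bcls_eq_top_iff)
      moreover have "bcls y p \<noteq> top" using \<open>y \<noteq> top\<close> 2 by (simp add: bcls_eq_top_iff)
      then have "top \<noteq> sup u (bcls y p)" by (rule u_star[rule_format])
      ultimately show False by simp
    qed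
  qed
qed

theorem proposition8p5:
  fixes S :: "('k::finite kext \<Rightarrow> 'k kext) set"
    and R :: "(('a::{finite, semilattice_sup, order_top}, 'k kext) boxt \<Rightarrow> ('a, 'k kext) boxt) set"
  assumes S_subgroup: "subgroup_Aut S"
    and S_disj: "\<forall>f\<in>S. \<forall>g\<in>S. f \<noteq> g \<longrightarrow> sup f g = kconst top"
    and R_sub: "subsemiring_JM1 R"
    and R_a: "\<forall>\<phi>\<in>R. \<exists>f\<in>(JM1 :: ('a \<Rightarrow> 'a) set). \<exists>g\<in>insert (kconst top) S. \<phi> = boxmap f g"
    and R_b: "\<forall>a b. a \<noteq> (top :: 'a) \<longrightarrow> (\<forall>g\<in>insert (kconst top) S. boxmap (fab a b) g \<in> R)"
    and R_c: "\<forall>\<phi>\<in>R. \<exists>a b. \<exists>g\<in>insert (kconst top) S. a \<noteq> (top :: 'a) \<and> boxmap (fab a b) g \<le> \<phi>"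
    and card_S: "card S = card (UNIV :: 'k set)"
    and n_cond: "card (UNIV :: 'k set) > 1 \<or> \<not> star_prop (sup :: 'a \<Rightarrow> 'a \<Rightarrow> 'a) top"
  shows "finite (UNIV :: ('a, 'k kext) boxt set)
    \<and> semimodule R sup (\<circ>) sup (\<lambda>\<phi> z. \<phi> z)
    \<and> idempotent_sm (sup :: ('a, 'k kext) boxt \<Rightarrow> _ \<Rightarrow> _)
    \<and> irreducible_sm R sup (\<lambda>\<phi> z. \<phi> z)
    \<and> \<not> star_prop (sup :: ('a, 'k kext) boxt \<Rightarrow> _ \<Rightarrow> _) top"
proof -
  have "R \<subseteq> JM1" "R \<noteq> {}" using R_sub by (auto simp: subsemiring_JM1_def)
  then have fixed: "\<forall>r\<in>R. r top = top" by (auto simp: JM1_def)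
  obtain a :: 'a where "a \<noteq> top" using \<open>R \<noteq> {}\<close> R_c by blast
  then have x: "bcls a (Fin undefined) \<noteq> (top :: ('a, 'k kext) boxt)"
    by (simp add: bcls_eq_top_iff top_kext_def)
  have "S \<subseteq> Aut" "id \<in> S" using S_subgroup by (auto simp: subgroup_Aut_def)
  then have S_transitive: "\<forall>i j. \<exists>g\<in>S. g (Fin i) = Fin j"
    using Aut_kext_transitive[OF _ S_disj card_S] by blast
  have fab_mem: "\<And>a b g. a \<noteq> top \<Longrightarrow> g \<in> S \<Longrightarrow> boxmap (fab a b) g \<in> R" using R_b by simp
  then have transitive: "\<forall>x. x \<noteq> top \<longrightarrow> (\<forall>z. \<exists>r\<in>R. r x = z)"
    using boxmap_fab_reaches[OF fab_mem S_transitive] by blast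
  have separating: "\<forall>c. c \<noteq> top \<longrightarrow> boxmap (fab c c) id \<in> R" using fab_mem \<open>id \<in> S\<close> by blast
  have "quotient_irreducible R sup (\<lambda>\<phi> z. \<phi> z)"
    unfolding quotient_irreducible_def
    using not_quasitrivial_if_transitive[OF x transitive]
      sm_congruence_boxt_eq_Id_or_UNIV[OF _ fixed transitive separating] by blast
  moreover have "sub_irreducible R sup (\<lambda>\<phi> z. \<phi> z)"
    using sub_irreducible_if_transitive[OF x fixed transitive] .
  ultimately show ?thesis
    using semimodule_JM1[OF \<open>R \<subseteq> JM1\<close>] not_star_prop_boxt[OF \<open>a \<noteq> top\<close> n_cond]
    by (simp add: irreducible_sm_def idempotent_sm_def)
qed

end
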